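(* For $1\le i\le N$ and every holomorphic $V_\tau$-valued function $f$ on $\Omega$, $$L(x)\bigl(\mathcal{U}_i-1-\kappa\gamma\bigr)\bigl(L^{-1}f\bigr)(x)=x_i\partial_if(x)-\kappa\sum_{j<i}\frac{x_i}{x_i-x_j}\bigl(\sigma^M(i,j)f\bigr)(x)-\kappa\sum_{j>i}\frac{x_j}{x_i-x_j}\bigl(\sigma^M(i,j)f\bigr)(x).$$
   Context: Setup: $\tau$ is a partition of $N$ (not $(N)$, $(1^N)$) identified with the irreducible orthogonal representation of $\mathcal{S}_N$ on $V_\tau\cong\mathbb{C}^{n_\tau}$ (orthonormal basis), $\tau(i,j):=\tau((i,j))$. $c(i,T)=(\text{column of }i)-(\text{row of }i)$ in a standard tableau $T$, $S_1(\tau)=\sum_ic(i,T)$, $\gamma=S_1(\tau)/N$. $\mathcal{S}_N$ acts on $x$ by $(xw)_i=x_{w(i)}$. $\mathbb{C}^N_{reg}=\{x\in(\mathbb{C}\setminus\{0\})^N:x_i\neq x_j,\ i\ne j\}$; $\Omega\subset\mathbb{C}^N_{reg}$ is open with $\Omega w=\Omega$ for all $w$. $L:\Omega\to GL_{n_\tau}(\mathbb{C})$ is holomorphic and satisfies $\partial_iL(x)=\kappa L(x)\bigl\{\sum_{j\ne i}\frac{\tau(i,j)}{x_i-x_j}-\frac{\gamma}{x_i}I\bigr\}$, $1\le i\le N$ ($\kappa\in\mathbb{R}$). $M:\mathcal{S}_N\times\Omega\to GL_{n_\tau}(\mathbb{C})$ is locally constant in $x$ with $M(I,x)=I$, $M(w_1w_2,x)=M(w_2,xw_1)M(w_1,x)$,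 and $L(xw)=M(w,x)L(x)\tau(w)$. $(\sigma^M(w)f)(x)=M(w,x)^{-1}f(xw)$. The operators $\mathcal{D}_i g(x)=\partial_ig(x)+\kappa\sum_{j\ne i}\tau(i,j)\frac{g(x)-g(x(i,j))}{x_i-x_j}$ and $\mathcal{U}_ig(x)=\mathcal{D}_i(x_ig)(x)-\kappa\sum_{j<i}\tau(i,j)g(x(i,j))$ are applied to holomorphic $V_\tau$-valued functions $g$ on $\Omega$. *)

theory Defs
  imports "HOL-Analysis.Analysis"
begin

text \<open>Coordinates of x in C^N are indexed by a finite linearly ordered type 'n
  (N = CARD('n)); the order on 'n plays the role of the order on 1..N.\<close>

definition tr :: "'a \<Rightarrow> 'a \<Rightarrow> 'a \<Rightarrow> 'a" where
  "tr a b = (\<lambda>k. if k = a then b else if k = b then a else k)"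

definition act :: "complex^'n \<Rightarrow> ('n \<Rightarrow> 'n) \<Rightarrow> complex^'n" where
  "act x w = (\<chi> i. x $ w i)"

definition reg_set :: "(complex^'n) set" where
  "reg_set = {x. (\<forall>i. x $ i \<noteq> 0) \<and> (\<forall>i j. i \<noteq> j \<longrightarrow> x $ i \<noteq> x $ j)}"

definition upd :: "complex^'n \<Rightarrow> 'n \<Rightarrow> complex \<Rightarrow> complex^'n" where
  "upd x i t = (\<chi> k. if k = i then t else x $ k)"

definition cdiff_at :: "(complex^'n \<Rightarrow> complex) \<Rightarrow> complex^'n \<Rightarrow> bool" where
  "cdiff_at g x \<longleftrightarrow> (\<exists>D. (g has_derivative D) (at x) \<and> (\<forall>c v. D (c *s v) = c * D v))"

definition holo_vec :: "(complex^'n \<Rightarrow> complex^'t) \<Rightarrow> (complex^'n) set \<Rightarrow> bool" where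
  "holo_vec f S \<longleftrightarrow> (\<forall>x\<in>S. \<forall>k. cdiff_at (\<lambda>y. f y $ k) x)"

definition holo_mat :: "(complex^'n \<Rightarrow> complex^'t^'s) \<Rightarrow> (complex^'n) set \<Rightarrow> bool" where
  "holo_mat F S \<longleftrightarrow> (\<forall>x\<in>S. \<forall>k l. cdiff_at (\<lambda>y. F y $ k $ l) x)"

definition pd_vec :: "'n \<Rightarrow> (complex^'n \<Rightarrow> complex^'t) \<Rightarrow> complex^'n \<Rightarrow> complex^'t" where
  "pd_vec i f x = (\<chi> k. deriv (\<lambda>t. f (upd x i t) $ k) (x $ i))"

definition pd_mat :: "'n \<Rightarrow> (complex^'n \<Rightarrow> complex^'t^'s) \<Rightarrow> complex^'n \<Rightarrow> complex^'t^'s" where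
  "pd_mat i F x = (\<chi> k l. deriv (\<lambda>t. F (upd x i t) $ k $ l) (x $ i))"

definition locally_const_on :: "(complex^'n) set \<Rightarrow> (complex^'n \<Rightarrow> 'b) \<Rightarrow> bool" where
  "locally_const_on S g \<longleftrightarrow> (\<forall>x\<in>S. \<exists>e>0. \<forall>y\<in>S. dist y x < e \<longrightarrow> g y = g x)"

definition is_partition :: "nat list \<Rightarrow> nat \<Rightarrow> bool" where
  "is_partition lam N \<longleftrightarrow> sorted_wrt (\<ge>) lam \<and> (\<forall>p\<in>set lam. 0 < p) \<and> sum_list lam = N"

text \<open>Cells (row, column), both 0-based.\<close>
definition cells :: "nat list \<Rightarrow> (nat \<times> nat) set" where
  "cells lam = {(r, c). r < length lam \<and> c < lam ! r}"

definition content :: "nat \<times> nat \<Rightarrow> int" where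
  "content rc = int (snd rc) - int (fst rc)"

text \<open>A standard tableau of shape lam filled with the (ordered) labels 'n:
  T a is the cell containing label a.\<close>
definition std_tableau :: "nat list \<Rightarrow> ('n::linorder \<Rightarrow> nat \<times> nat) \<Rightarrow> bool" where
  "std_tableau lam T \<longleftrightarrow> bij_betw T UNIV (cells lam) \<and>
     (\<forall>a b. fst (T a) = fst (T b) \<and> snd (T a) < snd (T b) \<longrightarrow> a < b) \<and>
     (\<forall>a b. snd (T a) = snd (T b) \<and> fst (T a) < fst (T b) \<longrightarrow> a < b)"

text \<open>S_1(tau) = sum over i of c(i,T); since T is a bijection from labels onto
  the cells, this is the sum of contents over all cells.\<close>
definition S1 :: "nat list \<Rightarrow> int" where
  "S1 lam = (\<Sum>rc\<in>cells lam. content rc)"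

definition adjacent :: "'n::linorder \<Rightarrow> 'n \<Rightarrow> bool" where
  "adjacent a b \<longleftrightarrow> a < b \<and> \<not> (\<exists>c. a < c \<and> c < b)"

text \<open>Young's orthogonal form: the basis of V_tau = C^'t is indexed by standard
  tableaux via tab; the matrix of tau(a,b), a b adjacent labels, column t.\<close>
definition young_matrix ::
  "('t \<Rightarrow> ('n::linorder \<Rightarrow> nat \<times> nat)) \<Rightarrow> 'n \<Rightarrow> 'n \<Rightarrow> complex^'t^'t" where
  "young_matrix tab a b = (\<chi> u t.
     (let T = tab t in
      if fst (T a) = fst (T b) then (if u = t then 1 else 0)
      else if snd (T a) = snd (T b) then (if u = t then -1 else 0)
      else (let r = real_of_int (content (T b) - content (T a)) in
            if u = t then complex_of_real (1 / r)
            else if tab u = T \<circ> tr a b then complex_of_real (sqrt (1 - 1 / r\<^sup>2))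
            else 0)))"

definition young_orthogonal_rep ::
  "nat list \<Rightarrow> ('t \<Rightarrow> ('n::{finite,linorder} \<Rightarrow> nat \<times> nat)) \<Rightarrow> (('n \<Rightarrow> 'n) \<Rightarrow> complex^'t^'t) \<Rightarrow> bool" where
  "young_orthogonal_rep lam tab tau \<longleftrightarrow>
     is_partition lam CARD('n) \<and>
     bij_betw tab UNIV {T. std_tableau lam T} \<and>
     (\<forall>w1 w2. w1 permutes UNIV \<longrightarrow> w2 permutes UNIV \<longrightarrow> tau (w1 \<circ> w2) = tau w1 ** tau w2) \<and>
     (\<forall>a b. adjacent a b \<longrightarrow> tau (tr a b) = young_matrix tab a b)"

definition dunklD :: "(('n \<Rightarrow> 'n) \<Rightarrow> complex^'t^'t) \<Rightarrow> real \<Rightarrow> 'n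
    \<Rightarrow> (complex^'n \<Rightarrow> complex^'t) \<Rightarrow> complex^'n \<Rightarrow> complex^'t" where
  "dunklD tau kappa i g x = pd_vec i g x +
     complex_of_real kappa *s (\<Sum>j\<in>UNIV - {i}.
        (1 / (x $ i - x $ j)) *s (tau (tr i j) *v (g x - g (act x (tr i j)))))"

definition opU :: "(('n::{finite,linorder} \<Rightarrow> 'n::{finite,linorder}) \<Rightarrow> complex^'t^'t) \<Rightarrow> real \<Rightarrow> 'n::{finite,linorder}
    \<Rightarrow> (complex^'n::{finite,linorder} \<Rightarrow> complex^'t) \<Rightarrow> complex^'n::{finite,linorder} \<Rightarrow> complex^'t" where
  "opU tau kappa i g x = dunklD tau kappa i (\<lambda>y. (y $ i) *s g y) x -
     complex_of_real kappa *s (\<Sum>j\<in>{j. j < i}. tau (tr i j) *v g (act x (tr i j)))"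

definition sigmaM :: "(('n::finite \<Rightarrow> 'n) \<Rightarrow> complex^'n \<Rightarrow> complex^'t^'t) \<Rightarrow> ('n \<Rightarrow> 'n)
    \<Rightarrow> (complex^'n \<Rightarrow> complex^'t) \<Rightarrow> complex^'n \<Rightarrow> complex^'t" where
  "sigmaM M w f x = matrix_inv (M w x) *v f (act x w)"

end

theory Submission
  imports Defs
begin

text \<open>Put g = L\<inverse> f. Along the i-th coordinate line f = L g, so by the Leibniz rule
  L \<partial>_i g = \<partial>_i f - (\<partial>_i L) g, and the differential equation expresses (\<partial>_i L) g through the
  vectors L \<tau>(i,j) g(x); equivariance of L turns L(x) \<tau>(i,j) g(x(i,j)) into (\<sigma>^M(i,j) f)(x).
  In L U_i g the terms x_i L \<tau>(i,j) g(x) / (x_i - x_j) of the Dunkl operator then cancel against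
  those coming from the differential equation, the \<gamma>-term cancels the shift \<kappa>\<gamma>, and
  x_j / (x_i - x_j) + 1 = x_i / (x_i - x_j) absorbs the lower sum of U_i into the reflection terms.\<close>

lemma matrix_inv_right:
  assumes "invertible (A::'a::semiring_1^'n^'n)"
  shows "A ** matrix_inv A = mat 1"
  using assms someI_ex[of "\<lambda>A'. A ** A' = mat 1 \<and> A' ** A = mat 1"]
  by (auto simp: invertible_def matrix_inv_def)

lemma matrix_inv_left:
  assumes "invertible (A::'a::semiring_1^'n^'n)"
  shows "matrix_inv A ** A = mat 1"
  using assms someI_ex[of "\<lambda>A'. A ** A' = mat 1 \<and> A' ** A = mat 1"]
  by (auto simp: invertible_def matrix_inv_def)

lemma matrix_inv_unique:
  assumes "invertible (A::'a::semiring_1^'n^'n)" and "A ** B = mat 1"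
  shows "matrix_inv A = B"
  by (metis assms matrix_inv_left matrix_mul_assoc matrix_mul_lid matrix_mul_rid)

lemma matrix_vector_mult_sum: "A *v (\<Sum>j\<in>S. v j) = (\<Sum>j\<in>S. A *v v j)"
  by (induct S rule: infinite_finite_induct) (auto simp: matrix_vector_right_distrib)

lemma sum_matrix_vector_mult: "(\<Sum>j\<in>S. A j) *v v = (\<Sum>j\<in>S. A j *v v)"
  by (induct S rule: infinite_finite_induct) (auto simp: matrix_vector_mult_add_rdistrib)

lemma mat_matrix_vector_mult: "mat c *v v = c *s (v::'a::semiring_1^'n)"
  by (simp add: vec_eq_iff matrix_vector_mult_def mat_def if_distrib if_distribR cong: if_cong)

lemma cramer_matrix_inv:
  assumes "invertible (A::'a::field^'n^'n)"
  shows "matrix_inv A *v b = (\<chi> k. det (\<chi> i j. if j = k then b $ i else A $ i $ j) / det A)"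
proof -
  have det: "det A \<noteq> 0"
    using assms by (simp add: invertible_det_nz)
  have "A *v (matrix_inv A *v b) = b"
    by (simp add: matrix_vector_mul_assoc matrix_inv_right[OF assms])
  then show ?thesis
    unfolding cramer[OF det] .
qed

lemma upd_self [simp]: "upd x i (x $ i) = x"
  by (simp add: upd_def vec_eq_iff)

lemma upd_nth_self [simp]: "upd x i t $ i = t"
  by (simp add: upd_def)

lemma has_derivative_upd:
  fixes x :: "complex^'n"
  shows "((\<lambda>t. upd x i t) has_derivative axis i) (at t)"
proof -
  have "linear (axis i :: complex \<Rightarrow> complex^'n)"
    by (auto simp: linear_iff vec_eq_iff axis_def)
  then have "((\<lambda>t. axis i t + (x - axis i (x $ i))) has_derivative axis i) (at t)"
    by (intro has_derivative_add_const bounded_linear_imp_has_derivative)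
      (simp add: linear_conv_bounded_linear)
  moreover have "(\<lambda>t. axis i t + (x - axis i (x $ i))) = (\<lambda>t. upd x i t)"
    by (auto simp: vec_eq_iff upd_def axis_def)
  ultimately show ?thesis by simp
qed

lemma eventually_upd_in_open:
  assumes "open S" and "x \<in> S"
  shows "eventually (\<lambda>t. upd x i t \<in> S) (nhds (x $ i))"
proof -
  have "continuous_on UNIV (\<lambda>t. upd x i t)"
    using has_derivative_continuous[OF has_derivative_upd]
    by (intro continuous_at_imp_continuous_on) blast
  then have "open ((\<lambda>t. upd x i t) -` S)"
    by (rule open_vimage[OF assms(1)])
  then show ?thesis
    using assms(2) unfolding eventually_nhds by (intro exI[of _ "(\<lambda>t. upd x i t) -` S"]) simp
qed

lemma cdiff_at_imp_field_differentiable_upd: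
  assumes "cdiff_at h x"
  shows "(\<lambda>t. h (upd x i t)) field_differentiable (at (x $ i))"
proof -
  obtain D where D: "(h has_derivative D) (at x)" and D_lin: "\<And>c v. D (c *s v) = c * D v"
    using assms unfolding cdiff_at_def by blast
  have "((\<lambda>t. h (upd x i t)) has_derivative (\<lambda>s. D (axis i s))) (at (x $ i))"
    using has_derivative_compose[OF has_derivative_upd, of h] D by simp
  moreover have "(\<lambda>s. D (axis i s)) = (*) (D (axis i 1))"
  proof
    fix s :: complex
    have "axis i s = s *s axis i (1::complex)" by (simp add: vec_eq_iff axis_def)
    then show "D (axis i s) = D (axis i 1) * s" by (simp add: D_lin mult.commute)
  qed
  ultimately show ?thesis
    unfolding field_differentiable_def has_field_derivative_def by auto
qed

lemma field_differentiable_det: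
  assumes "\<And>a b. (\<lambda>t. A t $ a $ b) field_differentiable (at t0)"
  shows "(\<lambda>t. det (A t :: complex^'n^'n)) field_differentiable (at t0)"
proof -
  have prod: "(\<lambda>t. \<Prod>j\<in>UNIV. A t $ j $ p j) field_differentiable (at t0)" for p :: "'n \<Rightarrow> 'n"
  proof -
    have "((\<lambda>t. \<Prod>j\<in>UNIV. A t $ j $ p j) has_field_derivative
        (\<Sum>j\<in>UNIV. deriv (\<lambda>t. A t $ j $ p j) t0 * (\<Prod>k\<in>UNIV - {j}. A t0 $ k $ p k))) (at t0)"
      by (rule has_field_derivative_prod) (simp add: assms DERIV_deriv_iff_field_differentiable)
    then show ?thesis unfolding field_differentiable_def by blast
  qed
  show ?thesis
    unfolding det_def
    by (intro field_differentiable_sum field_differentiable_mult field_differentiable_const prod)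
qed

lemma has_field_derivative_pd_vec:
  assumes "(\<lambda>t. f (upd x i t) $ k) field_differentiable (at (x $ i))"
  shows "((\<lambda>t. f (upd x i t) $ k) has_field_derivative pd_vec i f x $ k) (at (x $ i))"
  using assms unfolding pd_vec_def by (simp add: DERIV_deriv_iff_field_differentiable)

lemma has_field_derivative_pd_mat:
  assumes "(\<lambda>t. F (upd x i t) $ k $ l) field_differentiable (at (x $ i))"
  shows "((\<lambda>t. F (upd x i t) $ k $ l) has_field_derivative pd_mat i F x $ k $ l) (at (x $ i))"
  using assms unfolding pd_mat_def by (simp add: DERIV_deriv_iff_field_differentiable)

lemma pd_vec_eqI:
  assumes "\<And>k. ((\<lambda>t. f (upd x i t) $ k) has_field_derivative D $ k) (at (x $ i))"
  shows "pd_vec i f x = D"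
  using assms unfolding pd_vec_def by (simp add: vec_eq_iff DERIV_imp_deriv)

lemma pd_vec_cong_eventually:
  assumes "eventually (\<lambda>t. f (upd x i t) = h (upd x i t)) (nhds (x $ i))"
  shows "pd_vec i f x = pd_vec i h x"
  unfolding pd_vec_def vec_eq_iff
  by (auto intro!: deriv_cong_ev eventually_mono[OF assms])

lemma holo_vec_field_differentiable_upd:
  assumes "holo_vec f S" and "x \<in> S"
  shows "(\<lambda>t. f (upd x i t) $ k) field_differentiable (at (x $ i))"
  using assms cdiff_at_imp_field_differentiable_upd unfolding holo_vec_def by blast

lemma holo_mat_field_differentiable_upd:
  assumes "holo_mat F S" and "x \<in> S"
  shows "(\<lambda>t. F (upd x i t) $ k $ l) field_differentiable (at (x $ i))"
  using assms cdiff_at_imp_field_differentiable_upd unfolding holo_mat_def by blast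

lemma pd_vec_matrix_vector_mult:
  fixes A :: "complex^'n \<Rightarrow> complex^'t^'s" and g :: "complex^'n \<Rightarrow> complex^'t"
  assumes A: "\<And>k l. (\<lambda>t. A (upd x i t) $ k $ l) field_differentiable (at (x $ i))"
    and g: "\<And>l. (\<lambda>t. g (upd x i t) $ l) field_differentiable (at (x $ i))"
  shows "pd_vec i (\<lambda>y. A y *v g y) x = pd_mat i A x *v g x + A x *v pd_vec i g x"
proof (rule pd_vec_eqI)
  fix k
  have "((\<lambda>t. \<Sum>l\<in>UNIV. A (upd x i t) $ k $ l * g (upd x i t) $ l) has_field_derivative
      (\<Sum>l\<in>UNIV. pd_mat i A x $ k $ l * g (upd x i (x $ i)) $ l
                  + pd_vec i g x $ l * A (upd x i (x $ i)) $ k $ l)) (at (x $ i))"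
    by (intro DERIV_sum DERIV_mult has_field_derivative_pd_mat has_field_derivative_pd_vec A g)
  then show "((\<lambda>t. (A (upd x i t) *v g (upd x i t)) $ k) has_field_derivative
      (pd_mat i A x *v g x + A x *v pd_vec i g x) $ k) (at (x $ i))"
    by (simp add: matrix_vector_mult_def sum.distrib mult.commute)
qed

lemma pd_vec_coordinate_smult:
  assumes "\<And>l. (\<lambda>t. g (upd x i t) $ l) field_differentiable (at (x $ i))"
  shows "pd_vec i (\<lambda>y. (y $ i) *s g y) x = g x + (x $ i) *s pd_vec i g x"
proof (rule pd_vec_eqI)
  fix k
  have "((\<lambda>t. t * g (upd x i t) $ k) has_field_derivative
      1 * g (upd x i (x $ i)) $ k + pd_vec i g x $ k * x $ i) (at (x $ i))"
    by (intro DERIV_mult DERIV_ident has_field_derivative_pd_vec assms)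
  then show "((\<lambda>t. (upd x i t $ i *s g (upd x i t)) $ k) has_field_derivative
      (g x + (x $ i) *s pd_vec i g x) $ k) (at (x $ i))"
    by (simp add: mult.commute)
qed

lemma field_differentiable_matrix_inv_mult:
  fixes A :: "complex \<Rightarrow> complex^'n^'n" and b :: "complex \<Rightarrow> complex^'n"
  assumes A: "\<And>k l. (\<lambda>t. A t $ k $ l) field_differentiable (at t0)"
    and b: "\<And>k. (\<lambda>t. b t $ k) field_differentiable (at t0)"
    and inv: "eventually (\<lambda>t. invertible (A t)) (nhds t0)"
  shows "(\<lambda>t. (matrix_inv (A t) *v b t) $ k) field_differentiable (at t0)"
proof -
  define C where "C t = det (\<chi> i j. if j = k then b t $ i else A t $ i $ j) / det (A t)" for t
  have "C field_differentiable (at t0)"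
    unfolding C_def
  proof (intro field_differentiable_divide field_differentiable_det)
    show "(\<lambda>t. (\<chi> i j. if j = k then b t $ i else A t $ i $ j) $ i $ j)
        field_differentiable (at t0)" for i j
      using A b by (cases "j = k") simp_all
    show "det (A t0) \<noteq> 0"
      using eventually_nhds_x_imp_x[OF inv] invertible_det_nz by blast
  qed (rule A)
  then obtain D where C_deriv: "(C has_field_derivative D) (at t0)"
    unfolding field_differentiable_def by blast
  have ev: "eventually (\<lambda>t. C t = (matrix_inv (A t) *v b t) $ k) (nhds t0)"
    using inv by eventually_elim (simp add: cramer_matrix_inv C_def)
  have "((\<lambda>t. (matrix_inv (A t) *v b t) $ k) has_field_derivative D) (at t0)"
    using C_deriv unfolding DERIV_cong_ev[OF refl ev refl] .
  then show ?thesis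
    unfolding field_differentiable_def by blast
qed

lemma field_differentiable_upd_matrix_inv_mult:
  fixes L :: "complex^'n \<Rightarrow> complex^'t^'t" and f :: "complex^'n \<Rightarrow> complex^'t"
  assumes "open S" and x: "x \<in> S" and L: "holo_mat L S"
    and L_inv: "\<And>y. y \<in> S \<Longrightarrow> invertible (L y)" and f: "holo_vec f S"
  shows "(\<lambda>t. (matrix_inv (L (upd x i t)) *v f (upd x i t)) $ k) field_differentiable (at (x $ i))"
  using eventually_upd_in_open[OF \<open>open S\<close> x, of i]
  by (intro field_differentiable_matrix_inv_mult holo_mat_field_differentiable_upd[OF L x]
      holo_vec_field_differentiable_upd[OF f x]) (auto elim!: eventually_mono intro: L_inv)

lemma pd_vec_eq_leibniz_matrix_inv:
  fixes L :: "complex^'n \<Rightarrow> complex^'t^'t" and f :: "complex^'n \<Rightarrow> complex^'t"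
  assumes "open S" and x: "x \<in> S" and L: "holo_mat L S"
    and L_inv: "\<And>y. y \<in> S \<Longrightarrow> invertible (L y)" and f: "holo_vec f S"
  shows "pd_vec i f x = pd_mat i L x *v (matrix_inv (L x) *v f x)
    + L x *v pd_vec i (\<lambda>y. matrix_inv (L y) *v f y) x"
proof -
  have "pd_vec i f x = pd_vec i (\<lambda>y. L y *v (matrix_inv (L y) *v f y)) x"
    using eventually_upd_in_open[OF \<open>open S\<close> x, of i]
    by (intro pd_vec_cong_eventually) (auto elim!: eventually_mono
        simp: matrix_vector_mul_assoc matrix_inv_right[OF L_inv])
  also have "\<dots> = pd_mat i L x *v (matrix_inv (L x) *v f x)
      + L x *v pd_vec i (\<lambda>y. matrix_inv (L y) *v f y) x"
    by (intro pd_vec_matrix_vector_mult holo_mat_field_differentiable_upd[OF L x]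
        field_differentiable_upd_matrix_inv_mult[OF assms])
  finally show ?thesis .
qed

lemma tr_permutes: "tr a b permutes UNIV"
proof -
  have "tr a b \<circ> tr a b = id" by (auto simp: tr_def)
  then have "bij (tr a b)"
    using o_bij by blast
  then show ?thesis
    by (rule bij_imp_permutes) simp
qed

lemma act_tr_nth_self: "act x (tr i j) $ i = x $ j"
  by (simp add: act_def tr_def)

lemma sigmaM_eq_conjugate:
  fixes L :: "complex^'n \<Rightarrow> complex^'t^'t" and tau :: "('n \<Rightarrow> 'n) \<Rightarrow> complex^'t^'t"
  assumes L_equiv: "L (act x w) = M w x ** L x ** tau w"
    and L_inv: "invertible (L (act x w))" and M_inv: "invertible (M w x)"
  shows "sigmaM M w f x = L x *v (tau w *v (matrix_inv (L (act x w)) *v f (act x w)))"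
proof -
  have "M w x ** (L x ** tau w ** matrix_inv (L (act x w))) = mat 1"
    using matrix_inv_right[OF L_inv] by (simp add: L_equiv matrix_mul_assoc)
  then have "matrix_inv (M w x) = L x ** tau w ** matrix_inv (L (act x w))"
    by (rule matrix_inv_unique[OF M_inv])
  then show ?thesis
    by (simp add: sigmaM_def matrix_vector_mul_assoc matrix_mul_assoc)
qed

lemma reflection_sums_merge:
  fixes x :: "complex^'n::{finite,linorder}" and Q :: "'n \<Rightarrow> complex^'t"
  assumes "\<And>j. j \<noteq> i \<Longrightarrow> x $ i \<noteq> x $ j"
  shows "(\<Sum>j\<in>UNIV - {i}. (x $ j / (x $ i - x $ j)) *s Q j) + (\<Sum>j\<in>{j. j < i}. Q j)
       = (\<Sum>j\<in>{j. j < i}. (x $ i / (x $ i - x $ j)) *s Q j)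
         + (\<Sum>j\<in>{j. i < j}. (x $ j / (x $ i - x $ j)) *s Q j)"
proof -
  have parts: "UNIV - {i} = {j. j < i} \<union> {j. i < j}" by auto
  have split: "(\<Sum>j\<in>UNIV - {i}. (x $ j / (x $ i - x $ j)) *s Q j)
      = (\<Sum>j\<in>{j. j < i}. (x $ j / (x $ i - x $ j)) *s Q j)
        + (\<Sum>j\<in>{j. i < j}. (x $ j / (x $ i - x $ j)) *s Q j)"
    unfolding parts by (rule sum.union_disjoint) auto
  have "(\<Sum>j\<in>{j. j < i}. (x $ j / (x $ i - x $ j)) *s Q j + Q j)
      = (\<Sum>j\<in>{j. j < i}. (x $ i / (x $ i - x $ j)) *s Q j)"
  proof (rule sum.cong)
    fix j assume "j \<in> {j. j < i}"
    then have "x $ i - x $ j \<noteq> 0" using assms by auto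
    then have "x $ j / (x $ i - x $ j) + 1 = x $ i / (x $ i - x $ j)"
      by (simp add: field_simps)
    then show "(x $ j / (x $ i - x $ j)) *s Q j + Q j = (x $ i / (x $ i - x $ j)) *s Q j"
      by (metis vector_sadd_rdistrib vector_smult_lid)
  qed simp
  then show ?thesis
    unfolding split by (simp add: sum.distrib algebra_simps)
qed

lemma conjugated_opU_eq:
  fixes A :: "complex^'t^'t" and g :: "complex^'n::{finite,linorder} \<Rightarrow> complex^'t"
    and tau :: "('n \<Rightarrow> 'n) \<Rightarrow> complex^'t^'t"
  assumes xi: "x $ i \<noteq> 0" and distinct: "\<And>j. j \<noteq> i \<Longrightarrow> x $ i \<noteq> x $ j"
    and coordinate: "pd_vec i (\<lambda>y. (y $ i) *s g y) x = g x + (x $ i) *s pd_vec i g x"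
    and leibniz: "df = dA *v g x + A *v pd_vec i g x"
    and ode: "dA = mat (complex_of_real kappa) ** A **
        ((\<Sum>j\<in>UNIV - {i}. mat (1 / (x $ i - x $ j)) ** tau (tr i j))
         - mat (complex_of_real gamma / x $ i))"
    and reflection: "\<And>j. A *v (tau (tr i j) *v g (act x (tr i j))) = Q j"
  shows "A *v (opU tau kappa i g x - g x - complex_of_real (kappa * gamma) *s g x)
    = (x $ i) *s df
      - complex_of_real kappa *s (\<Sum>j\<in>{j. j < i}. (x $ i / (x $ i - x $ j)) *s Q j)
      - complex_of_real kappa *s (\<Sum>j\<in>{j. i < j}. (x $ j / (x $ i - x $ j)) *s Q j)"
proof -
  define k where "k = complex_of_real kappa"
  define c where "c = complex_of_real gamma"
  define a where "a = A *v g x"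
  define da where "da = A *v pd_vec i g x"
  define P where "P j = A *v (tau (tr i j) *v g x)" for j
  define S where "S = (\<Sum>j\<in>UNIV - {i}. (1 / (x $ i - x $ j)) *s P j)"
  define R where "R = (\<Sum>j\<in>UNIV - {i}. (x $ j / (x $ i - x $ j)) *s Q j)"
  define Ql where "Ql = (\<Sum>j\<in>{j. j < i}. Q j)"
  have dA: "dA *v g x = k *s S - (k * (c / x $ i)) *s a"
    by (simp add: ode S_def P_def a_def k_def c_def matrix_vector_mult_diff_rdistrib
        sum_matrix_vector_mult matrix_vector_mult_sum mat_matrix_vector_mult
        matrix_vector_mult_diff_distrib vector_scalar_commute vector_ssub_ldistrib vector_smult_assoc
        flip: matrix_vector_mul_assoc)
      (simp add: vec_eq_iff sum_component sum_distrib_left mult_ac)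
  \<comment> \<open>Since (x(i,j))_i = x_j, the difference quotient of y_i g(y) in D_i is
    (x_i P_j - x_j Q_j) / (x_i - x_j).\<close>
  have "(\<Sum>j\<in>UNIV - {i}. (1 / (x $ i - x $ j)) *s (x $ i *s P j - x $ j *s Q j))
      = x $ i *s S - R"
    by (simp add: S_def R_def vec_eq_iff sum_subtractf sum_distrib_left algebra_simps)
  then have dunkl: "A *v opU tau kappa i g x = a + x $ i *s da + k *s (x $ i *s S - R) - k *s Ql"
    by (simp add: opU_def dunklD_def coordinate act_tr_nth_self reflection matrix_vector_right_distrib
        matrix_vector_mult_diff_distrib matrix_vector_mult_sum vector_scalar_commute
        P_def Ql_def a_def da_def k_def)
  have merge: "R + Ql = (\<Sum>j\<in>{j. j < i}. (x $ i / (x $ i - x $ j)) *s Q j)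
      + (\<Sum>j\<in>{j. i < j}. (x $ j / (x $ i - x $ j)) *s Q j)"
    unfolding R_def Ql_def by (rule reflection_sums_merge[OF distinct])
  have "A *v (opU tau kappa i g x - g x - complex_of_real (kappa * gamma) *s g x)
      = A *v opU tau kappa i g x - a - (k * c) *s a"
    by (simp add: matrix_vector_mult_diff_distrib vector_scalar_commute a_def k_def c_def)
  also have "\<dots> = x $ i *s df - k *s (R + Ql)"
    using xi by (simp add: dunkl leibniz dA flip: da_def)
  finally show ?thesis
    unfolding merge k_def vector_add_ldistrib diff_diff_eq .
qed

theorem proposition4:
  fixes lam :: "nat list"
    and tab :: "'t::finite \<Rightarrow> ('n::{finite,linorder} \<Rightarrow> nat \<times> nat)"
    and tau :: "('n::{finite,linorder} \<Rightarrow> 'n::{finite,linorder}) \<Rightarrow> complex^'t^'t"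
    and kappa gamma :: real
    and Omega :: "(complex^'n::{finite,linorder}) set"
    and L :: "complex^'n::{finite,linorder} \<Rightarrow> complex^'t^'t"
    and M :: "('n::{finite,linorder} \<Rightarrow> 'n::{finite,linorder}) \<Rightarrow> complex^'n::{finite,linorder} \<Rightarrow> complex^'t^'t"
    and f :: "complex^'n::{finite,linorder} \<Rightarrow> complex^'t"
    and i :: "'n::{finite,linorder}"
  assumes rep: "young_orthogonal_rep lam tab tau"
    and not_triv: "lam \<noteq> [CARD('n)]"
    and not_sign: "lam \<noteq> replicate CARD('n) 1"
    and gamma_def: "gamma = real_of_int (S1 lam) / real CARD('n)"
    and Omega_open: "open Omega"
    and Omega_reg: "Omega \<subseteq> reg_set"
    and Omega_inv: "\<And>w x. w permutes UNIV \<Longrightarrow> x \<in> Omega \<Longrightarrow> act x w \<in> Omega"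
    and L_holo: "holo_mat L Omega"
    and L_inv: "\<And>x. x \<in> Omega \<Longrightarrow> invertible (L x)"
    and L_ode: "\<And>k x. x \<in> Omega \<Longrightarrow>
        pd_mat k L x = mat (complex_of_real kappa) ** L x **
          ((\<Sum>j\<in>UNIV - {k}. mat (1 / (x $ k - x $ j)) ** tau (tr k j))
           - mat (complex_of_real gamma / x $ k))"
    and M_lc: "\<And>w. w permutes UNIV \<Longrightarrow> locally_const_on Omega (M w)"
    and M_inv: "\<And>w x. w permutes UNIV \<Longrightarrow> x \<in> Omega \<Longrightarrow> invertible (M w x)"
    and M_id: "\<And>x. x \<in> Omega \<Longrightarrow> M id x = mat 1"
    and M_cocycle: "\<And>w1 w2 x. w1 permutes UNIV \<Longrightarrow> w2 permutes UNIV \<Longrightarrow> x \<in> Omega \<Longrightarrow>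
        M (w1 \<circ> w2) x = M w2 (act x w1) ** M w1 x"
    and L_equiv: "\<And>w x. w permutes UNIV \<Longrightarrow> x \<in> Omega \<Longrightarrow>
        L (act x w) = M w x ** L x ** tau w"
    and f_holo: "holo_vec f Omega"
  shows "\<forall>x\<in>Omega.
    L x *v (opU tau kappa i (\<lambda>y. matrix_inv (L y) *v f y) x
            - (\<lambda>y. matrix_inv (L y) *v f y) x
            - complex_of_real (kappa * gamma) *s ((\<lambda>y. matrix_inv (L y) *v f y) x))
    = (x $ i) *s pd_vec i f x
      - complex_of_real kappa *s (\<Sum>j\<in>{j. j < i}.
           (x $ i / (x $ i - x $ j)) *s sigmaM M (tr i j) f x)
      - complex_of_real kappa *s (\<Sum>j\<in>{j. i < j}.
           (x $ j / (x $ i - x $ j)) *s sigmaM M (tr i j) f x)"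
proof
  fix x assume x: "x \<in> Omega"
  define g where "g = (\<lambda>y. matrix_inv (L y) *v f y)"
  have x_reg: "x $ i \<noteq> 0" "\<And>j. j \<noteq> i \<Longrightarrow> x $ i \<noteq> x $ j"
    using Omega_reg x by (auto simp: reg_set_def)
  have g_diff: "(\<lambda>t. g (upd x i t) $ l) field_differentiable (at (x $ i))" for l
    unfolding g_def by (rule field_differentiable_upd_matrix_inv_mult[OF Omega_open x L_holo L_inv f_holo])
  have leibniz: "pd_vec i f x = pd_mat i L x *v g x + L x *v pd_vec i g x"
    unfolding g_def by (rule pd_vec_eq_leibniz_matrix_inv[OF Omega_open x L_holo L_inv f_holo])
  have reflection: "L x *v (tau (tr i j) *v g (act x (tr i j))) = sigmaM M (tr i j) f x" for j
    using tr_permutes[of i j] x unfolding g_def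
    by (intro sigmaM_eq_conjugate[where L = L and tau = tau, symmetric] L_equiv L_inv M_inv Omega_inv)
  show "L x *v (opU tau kappa i (\<lambda>y. matrix_inv (L y) *v f y) x
            - (\<lambda>y. matrix_inv (L y) *v f y) x
            - complex_of_real (kappa * gamma) *s ((\<lambda>y. matrix_inv (L y) *v f y) x))
    = (x $ i) *s pd_vec i f x
      - complex_of_real kappa *s (\<Sum>j\<in>{j. j < i}.
           (x $ i / (x $ i - x $ j)) *s sigmaM M (tr i j) f x)
      - complex_of_real kappa *s (\<Sum>j\<in>{j. i < j}.
           (x $ j / (x $ i - x $ j)) *s sigmaM M (tr i j) f x)"
    using conjugated_opU_eq[OF x_reg pd_vec_coordinate_smult[OF g_diff] leibniz L_ode[OF x] reflection]
    unfolding g_def .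
qed

end
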